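(* Let $(\mathfrak{A},\mathfrak{A}_0)$ be a CQ*-algebra as in the context and $X\in\mathfrak{A}$. Then $Eig(X)\subset\sigma^L_{\mathfrak{A}_0}(X)\subset\sigma_{\mathfrak{A}_0}(X)$.
   Context: Let $\mathfrak{A}_0$ be a unital C*-algebra with C*-norm $\|\cdot\|_0$ and unit $I$, and let $\|\cdot\|$ be another norm on $\mathfrak{A}_0$ with $\|A\|\le\|A\|_0$, $\|AB\|\le\|A\|\,\|B\|_0$, $\|A^*\|=\|A\|$. Let $\mathfrak{A}$ be the $\|\cdot\|$-completion of $\mathfrak{A}_0$; for $X\in\mathfrak{A}$, $A\in\mathfrak{A}_0$ and $A_n\to X$ in $\|\cdot\|$ ($A_n\in\mathfrak{A}_0$), $XA:=\lim A_nA$, $AX:=\lim AA_n$. $E(\mathfrak{A}_0)$ is the set of positive linear functionals $\omega$ on $\mathfrak{A}_0$ with $\omega(I)=1$ and $|\omega(A)|\le\gamma\|A\|$ for some $\gamma>0$; $\overline{\omega}$ is the continuous extension to $\mathfrak{A}$. $Eig(X)$ is the set of $\alpha\in\mathbb{C}$ for which there exists $\omega\in E(\mathfrak{A}_0)$ with $\overline{\omega}(AX)=\alpha\,\overline{\omega}(A)$ for all $A\in\mathfrak{A}_0$. $\sigma^L_{\mathfrak{A}_0}(X)$ (resp. $\sigma^R_{\mathfrak{A}_0}(X)$) is the set of $\alpha\in\mathbb{C}$ such that there is no $B\in\mathfrak{A}_0$ with $B(X-\alpha I)=I$ (resp. $(X-\alpha I)B=I$), and $\sigma_{\mathfrak{A}_0}(X)=\sigma^L_{\mathfrak{A}_0}(X)\cup\sigma^R_{\mathfrak{A}_0}(X)$.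 *)

theory Defs
  imports "HOL-Analysis.Analysis"
begin

class complex_vector = real_vector +
  fixes scaleC :: "complex \<Rightarrow> 'a \<Rightarrow> 'a" (infixr "*\<^sub>C" 75)
  assumes scaleC_add_right: "c *\<^sub>C (x + y) = c *\<^sub>C x + c *\<^sub>C y"
    and scaleC_add_left: "(c + d) *\<^sub>C x = c *\<^sub>C x + d *\<^sub>C x"
    and scaleC_scaleC: "c *\<^sub>C (d *\<^sub>C x) = (c * d) *\<^sub>C x"
    and scaleC_one: "1 *\<^sub>C x = x"
    and scaleR_scaleC: "scaleR r x = complex_of_real r *\<^sub>C x"

class complex_normed_vector = complex_vector + real_normed_vector +
  assumes norm_scaleC: "norm (c *\<^sub>C x) = cmod c * norm x"

class complex_normed_algebra_1 = complex_normed_vector + real_normed_algebra_1 +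
  assumes scaleC_mult_left: "(c *\<^sub>C x) * y = c *\<^sub>C (x * y)"
    and scaleC_mult_right: "x * (c *\<^sub>C y) = c *\<^sub>C (x * y)"

class cstar_algebra = complex_normed_algebra_1 + banach +
  fixes cstar :: "'a \<Rightarrow> 'a"
  assumes cstar_cstar: "cstar (cstar x) = x"
    and cstar_add: "cstar (x + y) = cstar x + cstar y"
    and cstar_scaleC: "cstar (c *\<^sub>C x) = cnj c *\<^sub>C cstar x"
    and cstar_mult: "cstar (x * y) = cstar y * cstar x"
    and cstar_identity: "norm (cstar x * x) = (norm x)\<^sup>2"

text \<open>The C*-norm of A0 is the type norm of 'a.  The second norm is nrm.  The completion
  of (A0, nrm) is modelled by an arbitrary Banach space 'b with a complex-linear map
  j :: 'a => 'b such that norm (j A) = nrm A and j has dense range.\<close>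

definition is_norm :: "('a::complex_vector \<Rightarrow> real) \<Rightarrow> bool" where
  "is_norm nrm \<longleftrightarrow> (\<forall>x. 0 \<le> nrm x) \<and> (\<forall>x. nrm x = 0 \<longrightarrow> x = 0)
     \<and> (\<forall>x y. nrm (x + y) \<le> nrm x + nrm y) \<and> (\<forall>c x. nrm (c *\<^sub>C x) = cmod c * nrm x)"

definition cq_setting ::
  "('a::cstar_algebra \<Rightarrow> real) \<Rightarrow> ('a \<Rightarrow> 'b::{complex_normed_vector,banach}) \<Rightarrow> bool" where
  "cq_setting nrm j \<longleftrightarrow> is_norm nrm
     \<and> (\<forall>A. nrm A \<le> norm A)
     \<and> (\<forall>A B. nrm (A * B) \<le> nrm A * norm B)
     \<and> (\<forall>A. nrm (cstar A) = nrm A)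
     \<and> (\<forall>A B. j (A + B) = j A + j B)
     \<and> (\<forall>c A. j (c *\<^sub>C A) = c *\<^sub>C j A)
     \<and> (\<forall>A. norm (j A) = nrm A)
     \<and> closure (range j) = UNIV"

text \<open>A X := lim A A_n and X A := lim A_n A, where j A_n \<rightarrow> X.\<close>
definition lmult :: "('a::cstar_algebra \<Rightarrow> 'b::{complex_normed_vector,banach}) \<Rightarrow> 'a \<Rightarrow> 'b \<Rightarrow> 'b" where
  "lmult j A X = (THE Y. \<forall>An. (\<lambda>k. j (An k)) \<longlonglongrightarrow> X \<longrightarrow> (\<lambda>k. j (A * An k)) \<longlonglongrightarrow> Y)"

definition rmult :: "('a::cstar_algebra \<Rightarrow> 'b::{complex_normed_vector,banach}) \<Rightarrow> 'b \<Rightarrow> 'a \<Rightarrow> 'b" where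
  "rmult j X A = (THE Y. \<forall>An. (\<lambda>k. j (An k)) \<longlonglongrightarrow> X \<longrightarrow> (\<lambda>k. j (An k * A)) \<longlonglongrightarrow> Y)"

definition ext_fun :: "('a::cstar_algebra \<Rightarrow> 'b::{complex_normed_vector,banach}) \<Rightarrow> ('a \<Rightarrow> complex) \<Rightarrow> 'b \<Rightarrow> complex" where
  "ext_fun j \<omega> = (THE f. continuous_on UNIV f \<and> (\<forall>A. f (j A) = \<omega> A))"

definition positive_functional :: "('a::cstar_algebra \<Rightarrow> complex) \<Rightarrow> bool" where
  "positive_functional \<omega> \<longleftrightarrow> (\<forall>A B. \<omega> (A + B) = \<omega> A + \<omega> B)
     \<and> (\<forall>c A. \<omega> (c *\<^sub>C A) = c * \<omega> A)
     \<and> (\<forall>A. \<omega> (cstar A * A) \<in> \<real> \<and> 0 \<le> Re (\<omega> (cstar A * A)))"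

definition E_states :: "('a::cstar_algebra \<Rightarrow> real) \<Rightarrow> ('a \<Rightarrow> complex) set" where
  "E_states nrm = {\<omega>. positive_functional \<omega> \<and> \<omega> 1 = 1
      \<and> (\<exists>\<gamma>>0. \<forall>A. cmod (\<omega> A) \<le> \<gamma> * nrm A)}"

definition Eig :: "('a::cstar_algebra \<Rightarrow> real) \<Rightarrow> ('a \<Rightarrow> 'b::{complex_normed_vector,banach}) \<Rightarrow> 'b \<Rightarrow> complex set" where
  "Eig nrm j X = {\<alpha>. \<exists>\<omega>\<in>E_states nrm.
      \<forall>A. ext_fun j \<omega> (lmult j A X) = \<alpha> * ext_fun j \<omega> (j A)}"

definition specL :: "('a::cstar_algebra \<Rightarrow> 'b::{complex_normed_vector,banach}) \<Rightarrow> 'b \<Rightarrow> complex set" where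
  "specL j X = {\<alpha>. \<not> (\<exists>B. lmult j B (X - \<alpha> *\<^sub>C j 1) = j 1)}"

definition specR :: "('a::cstar_algebra \<Rightarrow> 'b::{complex_normed_vector,banach}) \<Rightarrow> 'b \<Rightarrow> complex set" where
  "specR j X = {\<alpha>. \<not> (\<exists>B. rmult j (X - \<alpha> *\<^sub>C j 1) B = j 1)}"

definition spec :: "('a::cstar_algebra \<Rightarrow> 'b::{complex_normed_vector,banach}) \<Rightarrow> 'b \<Rightarrow> complex set" where
  "spec j X = specL j X \<union> specR j X"

end

theory Submission
  imports Defs
begin

(* If B (X - alpha I) = I and omega is an eigenstate of X for alpha, evaluating the extended
   state on B X = B (X - alpha I) + alpha B gives alpha omega(B) = 1 + alpha omega(B).
   This only needs A |-> B A and omega to extend from A0 to continuous additive maps on the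
   completion; both are Lipschitz for the second norm (nrm (B A) <= norm (cstar B) nrm A, via the
   involution), and additivity passes to the extension by density. *)

lemma dense_range_continuous_eq:
  fixes g h :: "'b::topological_space \<Rightarrow> 'c::t2_space"
  assumes "closure (range j) = UNIV" "continuous_on UNIV g" "continuous_on UNIV h"
    and "\<And>A. g (j A) = h (j A)"
  shows "g = h"
proof -
  have "closure (range j) \<subseteq> {x. g x = h x}"
    using assms by (intro closure_minimal closed_Collect_eq) auto
  then show ?thesis
    using assms(1) by auto
qed

lemma dense_range_extension_additive:
  fixes j :: "'a::plus \<Rightarrow> 'b::topological_monoid_add"
    and g :: "'b \<Rightarrow> 'c::{topological_monoid_add,t2_space}"
  assumes dense: "closure (range j) = UNIV" and g: "continuous_on UNIV g"
    and j_add: "\<And>A B. j (A + B) = j A + j B"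
    and f_add: "\<And>A B. f (A + B) = f A + f B"
    and ext: "\<And>A. g (j A) = f A"
  shows "g (Y + Z) = g Y + g Z"
proof -
  have shift: "continuous_on UNIV (\<lambda>Y. g (Y + c))" "continuous_on UNIV (\<lambda>Y. g (c + Y))" for c
    by (rule continuous_on_compose2[OF g], intro continuous_intros, simp)+
  have plus_j: "g (Y + j B) = g Y + g (j B)" for Y B
    using dense_range_continuous_eq[OF dense shift(1) continuous_on_add[OF g continuous_on_const]]
    by (metis ext f_add j_add)
  show ?thesis
    using dense_range_continuous_eq[OF dense shift(2) continuous_on_add[OF continuous_on_const g]]
    by (metis plus_j)
qed

lemma dense_range_lipschitz_extension:
  fixes j :: "'a \<Rightarrow> 'b::metric_space" and f :: "'a \<Rightarrow> 'c::complete_space"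
  assumes dense: "closure (range j) = UNIV" and "K \<ge> 0"
    and lip: "\<And>A B. dist (f A) (f B) \<le> K * dist (j A) (j B)"
  obtains g where "continuous_on UNIV g" "\<And>A. g (j A) = f A"
proof -
  define F where "F y = f (SOME A. j A = y)" for y
  have F_j: "F (j A) = f A" for A
  proof -
    have "j (SOME B. j B = j A) = j A" by (rule someI) simp
    then show ?thesis
      using lip[of "SOME B. j B = j A" A] by (simp add: F_def)
  qed
  have "lipschitz_on K (range j) F"
    unfolding lipschitz_on_def using assms(2) lip F_j by auto
  then obtain g where "uniformly_continuous_on (closure (range j)) g" "\<And>x. x \<in> range j \<Longrightarrow> F x = g x"
    using uniformly_continuous_on_extension_on_closure lipschitz_on_uniformly_continuous by metis
  then show ?thesis
    using that F_j dense uniformly_continuous_imp_continuous by (metis rangeI)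
qed

lemma cq_setting_j_add: "cq_setting nrm j \<Longrightarrow> j (A + B) = j A + j B"
  and cq_setting_j_scaleC: "cq_setting nrm j \<Longrightarrow> j (c *\<^sub>C A) = c *\<^sub>C j A"
  and cq_setting_dense: "cq_setting nrm j \<Longrightarrow> closure (range j) = UNIV"
  unfolding cq_setting_def by blast+

lemma cq_setting_dist_j:
  assumes "cq_setting nrm j"
  shows "dist (j A) (j B) = nrm (A - B)"
proof -
  have "j (A - B) = j A - j B"
    using cq_setting_j_add[OF assms, of "A - B" B] by (simp add: algebra_simps)
  then have "dist (j A) (j B) = norm (j (A - B))"
    by (simp add: dist_norm)
  also have "\<dots> = nrm (A - B)"
    using assms unfolding cq_setting_def by blast
  finally show ?thesis .
qed

text \<open>Only the one-sided bound nrm (A * B) \<le> nrm A * norm B is assumed; the involution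
  transfers it to the other side.\<close>
lemma cq_setting_nrm_mult_left_le:
  assumes "cq_setting nrm j"
  shows "nrm (B * A) \<le> norm (cstar B) * nrm A"
proof -
  have "nrm (B * A) = nrm (cstar A * cstar B)"
    using assms by (metis cq_setting_def cstar_mult)
  also have "\<dots> \<le> nrm (cstar A) * norm (cstar B)"
    using assms unfolding cq_setting_def by blast
  also have "\<dots> = norm (cstar B) * nrm A"
    using assms by (simp add: cq_setting_def)
  finally show ?thesis .
qed

lemma cq_setting_approx:
  assumes "cq_setting nrm j"
  obtains An where "(\<lambda>k. j (An k)) \<longlonglongrightarrow> X"
proof -
  obtain s where "\<And>k. s k \<in> range j" "s \<longlonglongrightarrow> X"
    using cq_setting_dense[OF assms] closure_sequential by blast
  then have "(\<lambda>k. j (inv j (s k))) \<longlonglongrightarrow> X"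
    by (simp add: f_inv_into_f)
  then show ?thesis ..
qed

lemma lmult_extension:
  fixes j :: "'a::cstar_algebra \<Rightarrow> 'b::{complex_normed_vector,banach}"
  assumes cq: "cq_setting nrm j"
  shows "continuous_on UNIV (lmult j B)" "lmult j B (j A) = j (B * A)"
proof -
  have lip: "dist (j (B * A)) (j (B * A')) \<le> norm (cstar B) * dist (j A) (j A')" for A A'
  proof -
    have "dist (j (B * A)) (j (B * A')) = nrm (B * (A - A'))"
      by (simp add: cq_setting_dist_j[OF cq] right_diff_distrib)
    also have "\<dots> \<le> norm (cstar B) * dist (j A) (j A')"
      by (simp add: cq_setting_dist_j[OF cq] cq_setting_nrm_mult_left_le[OF cq])
    finally show ?thesis .
  qed
  obtain g where g: "continuous_on UNIV g" "\<And>A. g (j A) = j (B * A)"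
    using dense_range_lipschitz_extension[OF cq_setting_dense[OF cq] norm_ge_zero lip] by blast
  have lim_g: "(\<lambda>k. j (B * An k)) \<longlonglongrightarrow> g X" if "(\<lambda>k. j (An k)) \<longlonglongrightarrow> X" for An X
    using continuous_on_tendsto_compose[OF g(1) that] by (simp add: g(2))
  have "lmult j B X = g X" for X
    unfolding lmult_def
  proof (rule the_equality)
    show "\<forall>An. (\<lambda>k. j (An k)) \<longlonglongrightarrow> X \<longrightarrow> (\<lambda>k. j (B * An k)) \<longlonglongrightarrow> g X"
      using lim_g by blast
    fix Y
    assume "\<forall>An. (\<lambda>k. j (An k)) \<longlonglongrightarrow> X \<longrightarrow> (\<lambda>k. j (B * An k)) \<longlonglongrightarrow> Y"
    moreover obtain An where "(\<lambda>k. j (An k)) \<longlonglongrightarrow> X"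
      using cq_setting_approx[OF cq] .
    ultimately show "Y = g X"
      using lim_g LIMSEQ_unique by blast
  qed
  then show "continuous_on UNIV (lmult j B)" "lmult j B (j A) = j (B * A)"
    using g by auto
qed

lemma lmult_add:
  fixes j :: "'a::cstar_algebra \<Rightarrow> 'b::{complex_normed_vector,banach}"
  assumes "cq_setting nrm j"
  shows "lmult j B (X + Y) = lmult j B X + lmult j B Y"
  by (rule dense_range_extension_additive[where j = j and f = "\<lambda>A. j (B * A)"])
    (use assms in \<open>simp_all add: cq_setting_dense cq_setting_j_add lmult_extension distrib_left\<close>)

lemma ext_fun_state:
  fixes j :: "'a::cstar_algebra \<Rightarrow> 'b::{complex_normed_vector,banach}"
  assumes cq: "cq_setting nrm j" and \<omega>: "\<omega> \<in> E_states nrm"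
  shows "continuous_on UNIV (ext_fun j \<omega>)" "ext_fun j \<omega> (j A) = \<omega> A"
proof -
  obtain \<gamma> where "\<gamma> > 0" and bound: "\<And>A. cmod (\<omega> A) \<le> \<gamma> * nrm A"
    using \<omega> unfolding E_states_def by blast
  have add: "\<omega> (A + A') = \<omega> A + \<omega> A'" for A A'
    using \<omega> unfolding E_states_def positive_functional_def by blast
  have lip: "dist (\<omega> A) (\<omega> A') \<le> \<gamma> * dist (j A) (j A')" for A A'
  proof -
    have "dist (\<omega> A) (\<omega> A') = cmod (\<omega> (A - A'))"
      using add[of "A - A'" A'] by (simp add: dist_norm)
    then show ?thesis
      using bound[of "A - A'"] by (simp add: cq_setting_dist_j[OF cq])
  qed
  obtain g where g: "continuous_on UNIV g" "\<And>A. g (j A) = \<omega> A"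
    using dense_range_lipschitz_extension[OF cq_setting_dense[OF cq] less_imp_le[OF \<open>\<gamma> > 0\<close>] lip]
    by blast
  have "ext_fun j \<omega> = g"
    unfolding ext_fun_def
  proof (rule the_equality)
    fix f
    assume "continuous_on UNIV f \<and> (\<forall>A. f (j A) = \<omega> A)"
    then show "f = g"
      using dense_range_continuous_eq[OF cq_setting_dense[OF cq] _ g(1)] g(2) by simp
  qed (use g in auto)
  then show "continuous_on UNIV (ext_fun j \<omega>)" "ext_fun j \<omega> (j A) = \<omega> A"
    using g by auto
qed

lemma ext_fun_add:
  fixes j :: "'a::cstar_algebra \<Rightarrow> 'b::{complex_normed_vector,banach}"
  assumes "cq_setting nrm j" "\<omega> \<in> E_states nrm"
  shows "ext_fun j \<omega> (X + Y) = ext_fun j \<omega> X + ext_fun j \<omega> Y"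
  by (rule dense_range_extension_additive[where j = j and f = \<omega>])
    (use assms in \<open>simp_all add: cq_setting_dense cq_setting_j_add ext_fun_state
      E_states_def positive_functional_def\<close>)

theorem lemma4p4:
  fixes nrm :: "'a::cstar_algebra \<Rightarrow> real"
    and j :: "'a \<Rightarrow> 'b::{complex_normed_vector,banach}"
    and X :: 'b
  assumes "cq_setting nrm j"
  shows "Eig nrm j X \<subseteq> specL j X \<and> specL j X \<subseteq> spec j X"
proof
  show "Eig nrm j X \<subseteq> specL j X"
  proof
    fix \<alpha> assume "\<alpha> \<in> Eig nrm j X"
    then obtain \<omega> where \<omega>: "\<omega> \<in> E_states nrm"
      and eigen: "\<And>A. ext_fun j \<omega> (lmult j A X) = \<alpha> * ext_fun j \<omega> (j A)"
      unfolding Eig_def by blast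
    have \<omega>_1: "\<omega> 1 = 1" and \<omega>_scaleC: "\<omega> (c *\<^sub>C A) = c * \<omega> A" for c A
      using \<omega> unfolding E_states_def positive_functional_def by auto
    show "\<alpha> \<in> specL j X"
    proof (unfold specL_def, rule CollectI, rule notI)
      assume "\<exists>B. lmult j B (X - \<alpha> *\<^sub>C j 1) = j 1"
      then obtain B where B: "lmult j B (X - \<alpha> *\<^sub>C j 1) = j 1" ..
      have "lmult j B X = lmult j B (X - \<alpha> *\<^sub>C j 1) + lmult j B (\<alpha> *\<^sub>C j 1)"
        using lmult_add[OF assms, of B "X - \<alpha> *\<^sub>C j 1" "\<alpha> *\<^sub>C j 1"] by simp
      also have "\<dots> = j 1 + j (B * (\<alpha> *\<^sub>C 1))"
        using B by (simp add: cq_setting_j_scaleC[OF assms, symmetric] lmult_extension(2)[OF assms])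
      finally have "\<alpha> * \<omega> B = 1 + \<alpha> * \<omega> B"
        using eigen[of B] ext_fun_add[OF assms \<omega>] ext_fun_state(2)[OF assms \<omega>] \<omega>_1 \<omega>_scaleC
        by (simp add: scaleC_mult_right)
      then show False by simp
    qed
  qed
  show "specL j X \<subseteq> spec j X"
    unfolding spec_def by blast
qed

end
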